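(* Let $N\geq 3$ and let $V:\mathbb{R}^N\to\mathbb{R}$ be a H\"older continuous function satisfying: (a) $V\in L^\infty(\mathbb{R}^N)$, and $V^+=V_1+V_2$ with $V^+\not\equiv 0$, $V_1\in L^{N/2}(\mathbb{R}^N)$ and $\lim_{|x|\to\infty}|x|^2V_2(x)=0$; (b) there exist $A,\alpha>0$ such that $V^+(x)\leq A|x|^{-2-\alpha}$ for all $x\in\mathbb{R}^N$; (c) $\lim_{x\to 0}|x|^{2(N-1)/N}V_2(x)=0$. Then $\Lambda>0$, where $\Lambda$ is defined below.
   Context: $V^+(x)=\max\{V(x),0\}$, $V^-(x)=\max\{-V(x),0\}$. $B_R=\{x\in\mathbb{R}^N: |x|<R\}$. For $R>0$, $$\lambda_1(R)=\min\left\{\int_{B_R}|\nabla u|^2dx:\ u\in H^1_0(B_R),\ \int_{B_R}V(x)u^2dx=1\right\}.$$ The map $R\mapsto\lambda_1(R)$ is decreasing, and $\Lambda:=\lim_{R\to\infty}\lambda_1(R)\geq 0$. *)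

theory Defs
  imports "HOL-Analysis.Analysis"
begin

text \<open>H^1_0(B_R) is the closure
  of these in the H^1 norm, so the Rayleigh infimum over them equals lambda_1(R).\<close>
definition test_fun :: "real \<Rightarrow> ('a::euclidean_space \<Rightarrow> real) \<Rightarrow> ('a \<Rightarrow> 'a) \<Rightarrow> bool" where
  "test_fun R u g \<longleftrightarrow>
     (\<forall>x. (u has_derivative (\<lambda>h. g x \<bullet> h)) (at x)) \<and> continuous_on UNIV g \<and>
     compact (closure {x. u x \<noteq> 0}) \<and> closure {x. u x \<noteq> 0} \<subseteq> ball 0 R"

text \<open>lambda_1(R), as an extended real (infimum of the empty set is +infinity).\<close>
definition lambda1 :: "('a::euclidean_space \<Rightarrow> real) \<Rightarrow> real \<Rightarrow> ereal" where
  "lambda1 V R = Inf {ereal (LINT x|lborel. (norm (g x))\<^sup>2) | u g.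
        test_fun R u g \<and> (LINT x|lborel. V x * (u x)\<^sup>2) = 1}"

definition Lambda :: "('a::euclidean_space \<Rightarrow> real) \<Rightarrow> ereal" where
  "Lambda V = Lim at_top (\<lambda>R. lambda1 V R)"

end

theory Submission
  imports Defs
begin

(* Only the positive part of V matters, and it is bounded by K / (1 + |x|^2): near the origin
   because V is bounded, at infinity by the decay hypothesis (b). For N >= 3 the weighted Hardy
   inequality  int u^2 / (1 + |x|^2) <= 4 int |grad u|^2  then gives
   int V u^2 <= 4 K int |grad u|^2  for every test function u, so lambda_1(R) >= 1 / (4 K)
   uniformly in R. The Hardy inequality follows from the dilation identity
   int grad f(x) . x dx = - N int f,  applied to f = u^2 / (1 + |x|^2), together with Young's
   inequality on the cross term. *)

lemma has_derivative_zero_where_vanishing: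
  assumes "(f has_derivative D) (at x)" "open S" "x \<in> S" "\<And>y. y \<in> S \<Longrightarrow> f y = 0"
  shows "D = (\<lambda>h. 0)"
proof -
  have "(f has_derivative (\<lambda>h. 0)) (at x)"
    by (rule has_derivative_transform_within_open[OF has_derivative_const assms(2,3)])
      (simp add: assms(4))
  then show ?thesis
    using assms(1) has_derivative_unique by blast
qed

lemma test_fun_vanishes:
  assumes "test_fun R u g" "R \<le> norm x"
  shows "u x = 0" "g x = 0"
proof -
  define C where "C = closure {x. u x \<noteq> 0}"
  have "C \<subseteq> ball 0 R"
    using assms(1) unfolding test_fun_def C_def by blast
  then have "x \<in> - C"
    using assms(2) by auto
  have vanish: "u y = 0" if "y \<in> - C" for y
    using that closure_subset[of "{x. u x \<noteq> 0}"] unfolding C_def by blast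
  then show "u x = 0"
    using \<open>x \<in> - C\<close> .
  have "(u has_derivative (\<lambda>h. g x \<bullet> h)) (at x)"
    using assms(1) unfolding test_fun_def by blast
  moreover have "open (- C)"
    unfolding C_def by blast
  ultimately have "(\<lambda>h. g x \<bullet> h) = (\<lambda>h. 0)"
    using \<open>x \<in> - C\<close> vanish by (rule has_derivative_zero_where_vanishing)
  from fun_cong[OF this, of "g x"] show "g x = 0"
    by simp
qed

lemma test_fun_continuous: "test_fun R u g \<Longrightarrow> continuous_on UNIV u"
  unfolding test_fun_def
  by (meson continuous_at_imp_continuous_on has_derivative_continuous)

lemma test_fun_mono: "test_fun R u g \<Longrightarrow> R \<le> R' \<Longrightarrow> test_fun R' u g"
  unfolding test_fun_def by (meson order.trans subset_ball)

lemma integrable_vanishing_outside_cball: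
  fixes f :: "'a::euclidean_space \<Rightarrow> 'b::{banach, second_countable_topology}"
  assumes "continuous_on UNIV f" "\<And>x. r \<le> norm x \<Longrightarrow> f x = 0"
  shows "integrable lborel f"
proof -
  have "integrable lborel (\<lambda>x. indicator (cball 0 r) x *\<^sub>R f x)"
    by (rule borel_integrable_compact) (auto intro: continuous_on_subset[OF assms(1)])
  moreover have "(\<lambda>x. indicator (cball 0 r) x *\<^sub>R f x) = f"
    using assms(2) by (force simp: indicator_def)
  ultimately show ?thesis
    by simp
qed

lemma lborel_integral_eq_integral_cbox:
  fixes f :: "'a::euclidean_space \<Rightarrow> real"
  assumes "continuous_on UNIV f" "\<And>x. r \<le> norm x \<Longrightarrow> f x = 0" "cball 0 r \<subseteq> cbox a b"
  shows "(LINT x|lborel. f x) = integral (cbox a b) f"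
proof -
  have "(\<lambda>x. if x \<in> cbox a b then f x else 0) = f"
    using assms(2,3) by (force simp: subset_iff)
  then have "integral (cbox a b) f = integral UNIV f"
    using integral_restrict_UNIV[of "cbox a b" f] by simp
  then show ?thesis
    using integral_lborel[OF integrable_vanishing_outside_cball[OF assms(1,2)]] by simp
qed

lemma lborel_integral_dilation:
  fixes f :: "'a::euclidean_space \<Rightarrow> real"
  assumes "integrable lborel f" "c \<noteq> 0"
  shows "(LINT x|lborel. f x) = \<bar>c\<bar> ^ DIM('a) * (LINT x|lborel. f (c *\<^sub>R x))"
proof -
  have [measurable]: "f \<in> borel_measurable borel"
    using assms(1) by auto
  show ?thesis
    by (subst lborel_affine[OF assms(2), of 0]) (auto simp: integral_density integral_distr)
qed

lemma one_add_norm_power2_neq_zero [simp]: "1 + (norm x)\<^sup>2 \<noteq> (0::real)"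
  by (metis add_pos_nonneg zero_le_power2 zero_less_one less_irrefl)

lemma has_derivative_square_div_one_add_norm_power2:
  fixes u :: "'a::real_inner \<Rightarrow> real"
  assumes "(u has_derivative (\<lambda>h. v \<bullet> h)) (at y)"
  shows "((\<lambda>x. (u x)\<^sup>2 / (1 + (norm x)\<^sup>2)) has_derivative
    (\<lambda>h. 2 * u y * (v \<bullet> h) / (1 + (norm y)\<^sup>2)
      - 2 * (u y)\<^sup>2 * (y \<bullet> h) / (1 + (norm y)\<^sup>2)\<^sup>2)) (at y)"
proof -
  have num: "((\<lambda>x. (u x)\<^sup>2) has_derivative (\<lambda>h. 2 * u y * (v \<bullet> h))) (at y)"
    using has_derivative_power[OF assms, of 2] by (simp add: algebra_simps)
  have "((\<lambda>x. 1 + x \<bullet> x) has_derivative (\<lambda>h. 2 * (y \<bullet> h))) (at y)"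
    by (auto intro!: derivative_eq_intros simp: inner_commute)
  then have denom: "((\<lambda>x. 1 + (norm x)\<^sup>2) has_derivative (\<lambda>h. 2 * (y \<bullet> h))) (at y)"
    by (simp add: power2_norm_eq_inner)
  show ?thesis
    by (rule has_derivative_eq_rhs
        [OF has_derivative_divide[OF num denom one_add_norm_power2_neq_zero]])
      (simp add: fun_eq_iff field_simps power2_eq_square)
qed

lemma integral_cbox_dilation:
  fixes f :: "'a::euclidean_space \<Rightarrow> real"
  assumes f_cont: "continuous_on UNIV f" and supp: "\<And>x. r \<le> norm x \<Longrightarrow> f x = 0"
    and "0 < t" and box: "cball 0 (r / t) \<subseteq> cbox a b"
  shows "integral (cbox a b) (\<lambda>x. f (t *\<^sub>R x)) = (LINT x|lborel. f x) / t ^ DIM('a)"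
proof -
  have ft_cont: "continuous_on UNIV (\<lambda>x. f (t *\<^sub>R x))"
    by (intro continuous_on_compose2[OF f_cont] continuous_intros) auto
  have ft_supp: "f (t *\<^sub>R x) = 0" if "r / t \<le> norm x" for x
    using supp[of "t *\<^sub>R x"] that \<open>0 < t\<close> by (simp add: divide_le_eq mult.commute)
  have "integral (cbox a b) (\<lambda>x. f (t *\<^sub>R x)) = (LINT x|lborel. f (t *\<^sub>R x))"
    by (rule lborel_integral_eq_integral_cbox[OF ft_cont ft_supp box, symmetric])
  also have "\<dots> = (LINT x|lborel. f x) / t ^ DIM('a)"
    using lborel_integral_dilation[OF integrable_vanishing_outside_cball[OF f_cont supp], where c=t]
      \<open>0 < t\<close>
    by (simp add: field_simps)
  finally show ?thesis .
qed

lemma has_field_derivative_integral_dilation: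
  fixes f :: "'a::euclidean_space \<Rightarrow> real"
  assumes deriv: "\<And>x. (f has_derivative Df x) (at x)"
    and Df_cont: "continuous_on UNIV (\<lambda>p. Df (fst p) (snd p))"
  shows "((\<lambda>t. integral (cbox a b) (\<lambda>x. f (t *\<^sub>R x))) has_field_derivative
    integral (cbox a b) (\<lambda>x. Df x x)) (at 1)"
proof -
  have f_cont: "continuous_on UNIV f"
    using deriv by (meson continuous_at_imp_continuous_on has_derivative_continuous)
  have "((\<lambda>t. integral (cbox a b) (\<lambda>x. f (t *\<^sub>R x))) has_field_derivative
    integral (cbox a b) (\<lambda>x. Df (1 *\<^sub>R x) x)) (at 1 within UNIV)"
  proof (rule leibniz_rule_field_derivative[where fx="\<lambda>t x. Df (t *\<^sub>R x) x"])
    fix t and x :: 'a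
    have "((\<lambda>t. t *\<^sub>R x) has_derivative (\<lambda>s. s *\<^sub>R x)) (at t)"
      by (intro derivative_eq_intros) auto
    then have "((\<lambda>t. f (t *\<^sub>R x)) has_derivative (\<lambda>s. Df (t *\<^sub>R x) (s *\<^sub>R x))) (at t)"
      by (rule has_derivative_compose[OF _ deriv])
    then show "((\<lambda>t. f (t *\<^sub>R x)) has_field_derivative Df (t *\<^sub>R x) x) (at t within UNIV)"
      unfolding has_field_derivative_def
      by (rule has_derivative_eq_rhs)
        (use has_derivative_linear[OF deriv] in \<open>auto simp: linear_scale mult.commute\<close>)
  next
    fix t
    show "(\<lambda>x. f (t *\<^sub>R x)) integrable_on cbox a b"
      by (intro integrable_continuous continuous_on_compose2[OF f_cont] continuous_intros) auto
  next
    show "continuous_on (UNIV \<times> cbox a b) (\<lambda>(t, x). Df (t *\<^sub>R x) x)"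
    proof -
      have "continuous_on (UNIV \<times> cbox a b) (\<lambda>p. (fst p *\<^sub>R snd p, snd p))"
        by (intro continuous_intros)
      from continuous_on_compose2[OF Df_cont this] show ?thesis
        by (simp add: case_prod_beta)
    qed
  qed auto
  then show ?thesis
    by simp
qed

lemma integral_radial_derivative:
  fixes f :: "'a::euclidean_space \<Rightarrow> real"
  assumes deriv: "\<And>x. (f has_derivative Df x) (at x)"
    and Df_cont: "continuous_on UNIV (\<lambda>p. Df (fst p) (snd p))"
    and supp: "\<And>x. r \<le> norm x \<Longrightarrow> f x = 0"
  shows "(LINT x|lborel. Df x x) = - real DIM('a) * (LINT x|lborel. f x)"
proof -
  define \<rho> where "\<rho> = max r 1"
  have \<rho>: "0 < \<rho>" "\<And>x. \<rho> \<le> norm x \<Longrightarrow> f x = 0"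
    using supp unfolding \<rho>_def by fastforce+
  have f_cont: "continuous_on UNIV f"
    using deriv by (meson continuous_at_imp_continuous_on has_derivative_continuous)
  have Df_diag_cont: "continuous_on UNIV (\<lambda>x. Df x x)"
    using continuous_on_compose2[OF Df_cont continuous_on_Pair[OF continuous_on_id continuous_on_id]]
    by simp
  have Df_supp: "Df x x = 0" if "2 * \<rho> \<le> norm x" for x
  proof -
    have "Df x = (\<lambda>h. 0)"
      by (rule has_derivative_zero_where_vanishing[OF deriv, of "- cball 0 \<rho>"])
        (use that \<rho> in auto)
    then show ?thesis by simp
  qed
  obtain a where box: "cball (0::'a) (2 * \<rho>) \<subseteq> cbox (-a) a"
    using bounded_subset_cbox_symmetric[of "cball (0::'a) (2 * \<rho>)"] by auto
  define I where "I = (LINT x|lborel. f x)"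
  define F where "F t = integral (cbox (-a) a) (\<lambda>x. f (t *\<^sub>R x))" for t
  have F_eq: "F t = I / t ^ DIM('a)" if "t \<in> {1/2<..<2}" for t
    unfolding F_def I_def
  proof (rule integral_cbox_dilation[OF f_cont \<rho>(2)])
    show "0 < t"
      using that by simp
    have "\<rho> / t \<le> 2 * \<rho>"
      using that \<rho>(1) by (simp add: divide_le_eq)
    then show "cball 0 (\<rho> / t) \<subseteq> cbox (-a) a"
      using box subset_cball by blast
  qed
  have F_deriv: "(F has_field_derivative integral (cbox (-a) a) (\<lambda>x. Df x x)) (at 1)"
    unfolding F_def[abs_def] by (rule has_field_derivative_integral_dilation[OF deriv Df_cont])
  have "((\<lambda>t. I / t ^ DIM('a)) has_field_derivative integral (cbox (-a) a) (\<lambda>x. Df x x)) (at 1)"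
    by (rule has_field_derivative_transform_within_open[OF F_deriv, of "{1/2<..<2}"])
      (auto simp: F_eq)
  moreover have "((\<lambda>t. I / t ^ DIM('a)) has_field_derivative - real DIM('a) * I) (at 1)"
    by (auto intro!: derivative_eq_intros)
  ultimately have "integral (cbox (-a) a) (\<lambda>x. Df x x) = - real DIM('a) * I"
    by (rule DERIV_unique)
  moreover have "(LINT x|lborel. Df x x) = integral (cbox (-a) a) (\<lambda>x. Df x x)"
    by (rule lborel_integral_eq_integral_cbox[OF Df_diag_cont Df_supp box])
  ultimately show ?thesis
    unfolding I_def by simp
qed

lemma hardy_pointwise_bound:
  fixes x v :: "'a::real_inner" and w :: real
  shows "2 * w\<^sup>2 * (x \<bullet> x) / (1 + (norm x)\<^sup>2)\<^sup>2 - 2 * w * (v \<bullet> x) / (1 + (norm x)\<^sup>2)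
    \<le> 5/2 * w\<^sup>2 / (1 + (norm x)\<^sup>2) + 2 * (norm v)\<^sup>2"
proof -
  define d where "d = 1 + (norm x)\<^sup>2"
  define z where "z = w / d"
  have d: "0 < d"
    unfolding d_def by (simp add: add_pos_nonneg)
  have w: "w = z * d"
    using d unfolding z_def by simp
  have lhs: "2 * w\<^sup>2 * (x \<bullet> x) / d\<^sup>2 - 2 * w * (v \<bullet> x) / d
    = 2 * z\<^sup>2 * (norm x)\<^sup>2 - 2 * z * (v \<bullet> x)"
    using d unfolding w power2_norm_eq_inner[symmetric] by (simp add: field_simps power2_eq_square)
  have rhs: "5/2 * w\<^sup>2 / d = 5/2 * z\<^sup>2 * d"
    using d unfolding w by (simp add: field_simps power2_eq_square)
  have "- (z * (v \<bullet> x)) \<le> \<bar>z\<bar> * (norm v * norm x)"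
    by (metis Cauchy_Schwarz_ineq2 abs_ge_minus_self abs_mult abs_ge_zero mult_left_mono order_trans)
  moreover have "2 * (\<bar>z\<bar> * (norm v * norm x)) \<le> 1/2 * (z\<^sup>2 * (norm x)\<^sup>2) + 2 * (norm v)\<^sup>2"
    using zero_le_power2[of "\<bar>z\<bar> * norm x - 2 * norm v"]
    by (simp add: power2_eq_square algebra_simps)
  moreover have "z\<^sup>2 * (norm x)\<^sup>2 \<le> z\<^sup>2 * d"
    unfolding d_def by (simp add: mult_left_mono)
  ultimately show ?thesis
    using lhs rhs unfolding d_def by linarith
qed

lemma hardy_inequality_test_fun:
  fixes u :: "'a::euclidean_space \<Rightarrow> real"
  assumes tf: "test_fun R u g" and dim: "3 \<le> DIM('a)"
  shows "(LINT x|lborel. (u x)\<^sup>2 / (1 + (norm x)\<^sup>2)) \<le> 4 * (LINT x|lborel. (norm (g x))\<^sup>2)"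
proof -
  define f where "f x = (u x)\<^sup>2 / (1 + (norm x)\<^sup>2)" for x
  define Df where "Df x h = 2 * u x * (g x \<bullet> h) / (1 + (norm x)\<^sup>2)
    - 2 * (u x)\<^sup>2 * (x \<bullet> h) / (1 + (norm x)\<^sup>2)\<^sup>2" for x h
  define I where "I = (LINT x|lborel. f x)"
  define J where "J = (LINT x|lborel. (norm (g x))\<^sup>2)"
  have u_cont: "continuous_on S (\<lambda>x. u (h x))"
    if "continuous_on S h" for S and h :: "'b::topological_space \<Rightarrow> 'a"
    using continuous_on_compose2[OF test_fun_continuous[OF tf] that] by simp
  have g_cont: "continuous_on S (\<lambda>x. g (h x))"
    if "continuous_on S h" for S and h :: "'b::topological_space \<Rightarrow> 'a"
    using continuous_on_compose2[OF _ that] tf unfolding test_fun_def by blast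
  have supp: "u x = 0" "g x = 0" if "R \<le> norm x" for x
    using test_fun_vanishes[OF tf that] by simp_all
  have f_int: "integrable lborel f"
    unfolding f_def
    by (rule integrable_vanishing_outside_cball[where r=R])
      (auto intro!: continuous_intros u_cont simp: supp)
  have Df_int: "integrable lborel (\<lambda>x. Df x x)"
    unfolding Df_def
    by (rule integrable_vanishing_outside_cball[where r=R])
      (auto intro!: continuous_intros u_cont g_cont simp: supp)
  have g_int: "integrable lborel (\<lambda>x. (norm (g x))\<^sup>2)"
    by (rule integrable_vanishing_outside_cball[where r=R])
      (auto intro!: continuous_intros g_cont simp: supp)
  have "(LINT x|lborel. Df x x) = - real DIM('a) * I"
    unfolding I_def
  proof (rule integral_radial_derivative[of f Df])
    show "(f has_derivative Df x) (at x)" for x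
      unfolding f_def[abs_def] Df_def
      by (rule has_derivative_square_div_one_add_norm_power2) (use tf in \<open>simp add: test_fun_def\<close>)
    show "continuous_on UNIV (\<lambda>p. Df (fst p) (snd p))"
      unfolding Df_def by (auto intro!: continuous_intros u_cont g_cont)
    show "R \<le> norm x \<Longrightarrow> f x = 0" for x
      by (simp add: f_def supp)
  qed
  moreover have "(LINT x|lborel. - Df x x) \<le> (LINT x|lborel. 5/2 * f x + 2 * (norm (g x))\<^sup>2)"
  proof (rule integral_mono)
    show "integrable lborel (\<lambda>x. - Df x x)"
      using Df_int by simp
    show "integrable lborel (\<lambda>x. 5/2 * f x + 2 * (norm (g x))\<^sup>2)"
      using f_int g_int by simp
    show "- Df x x \<le> 5/2 * f x + 2 * (norm (g x))\<^sup>2" for x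
      using hardy_pointwise_bound[of "u x" x "g x"] by (simp add: f_def Df_def)
  qed
  ultimately have "real DIM('a) * I \<le> 5/2 * I + 2 * J"
    using f_int g_int by (simp add: I_def J_def)
  moreover have "0 \<le> I"
    unfolding I_def f_def by (rule integral_nonneg_AE) (simp add: add_pos_nonneg)
  moreover have "3 * I \<le> real DIM('a) * I"
    using dim \<open>0 \<le> I\<close> by (intro mult_right_mono) auto
  ultimately show ?thesis
    unfolding I_def J_def f_def by linarith
qed

lemma bounded_decaying_le_inverse_quadratic:
  fixes W :: "'a::real_normed_vector \<Rightarrow> real"
  assumes nonneg: "\<And>x. 0 \<le> W x" and bdd: "\<And>x. W x \<le> M"
    and decay: "\<And>x. x \<noteq> 0 \<Longrightarrow> W x \<le> A * norm x powr (-2 - \<alpha>)"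
    and "0 \<le> A" "0 \<le> \<alpha>"
  shows "\<exists>K>0. \<forall>x. W x \<le> K / (1 + (norm x)\<^sup>2)"
proof -
  have "0 \<le> M"
    using nonneg bdd order_trans by blast
  define K where "K = 2 * (M + A) + 1"
  have "W x \<le> K / (1 + (norm x)\<^sup>2)" for x
  proof (cases "norm x \<le> 1")
    case True
    then have "(norm x)\<^sup>2 \<le> 1"
      by (simp add: power_le_one)
    then have "M * (1 + (norm x)\<^sup>2) \<le> M * 2"
      using \<open>0 \<le> M\<close> by (intro mult_left_mono) auto
    then have "M * (1 + (norm x)\<^sup>2) \<le> K"
      using \<open>0 \<le> A\<close> unfolding K_def by (simp add: algebra_simps)
    with bdd[of x] have "W x * (1 + (norm x)\<^sup>2) \<le> K"
      by (meson mult_right_mono order_trans zero_le_power2 add_nonneg_nonneg zero_le_one)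
    then show ?thesis
      by (simp add: pos_le_divide_eq add_pos_nonneg)
  next
    case False
    then have "1 \<le> (norm x)\<^sup>2"
      by (simp add: one_le_power)
    have "W x \<le> A * norm x powr (-2 - \<alpha>)"
      using False by (intro decay) auto
    also have "\<dots> \<le> A * norm x powr (-2)"
      using False \<open>0 \<le> A\<close> \<open>0 \<le> \<alpha>\<close> by (intro mult_left_mono powr_mono) auto
    also have "\<dots> = A / (norm x)\<^sup>2"
      using False by (simp add: powr_minus powr_numeral divide_inverse)
    also have "\<dots> \<le> 2 * A / (1 + (norm x)\<^sup>2)"
    proof -
      have "A * 1 \<le> A * (norm x)\<^sup>2"
        using \<open>1 \<le> (norm x)\<^sup>2\<close> \<open>0 \<le> A\<close> by (intro mult_left_mono) auto
      then have "A * (1 + (norm x)\<^sup>2) \<le> 2 * A * (norm x)\<^sup>2"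
        by (simp add: algebra_simps)
      then show ?thesis
        using \<open>1 \<le> (norm x)\<^sup>2\<close> \<open>0 \<le> A\<close> by (simp add: divide_simps add_pos_nonneg)
    qed
    also have "\<dots> \<le> K / (1 + (norm x)\<^sup>2)"
      using \<open>0 \<le> M\<close> unfolding K_def by (intro divide_right_mono) (auto simp: add_pos_nonneg)
    finally show ?thesis .
  qed
  moreover have "0 < K"
    unfolding K_def using \<open>0 \<le> M\<close> \<open>0 \<le> A\<close> by simp
  ultimately show ?thesis
    by blast
qed

lemma tendsto_at_top_INF_antimono:
  fixes f :: "'a::linorder \<Rightarrow> 'b::{complete_linorder,linorder_topology}"
  assumes "antimono f"
  shows "(f \<longlongrightarrow> (INF x. f x)) at_top"
  using assms
  by (intro decreasing_tendsto)
    (auto simp: INF_lower INF_less_iff antimono_def eventually_at_top_linorder intro: le_less_trans)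

lemma lambda1_antimono: "antimono (lambda1 V)"
  unfolding lambda1_def antimono_def
  by (intro allI impI Inf_superset_mono) (blast intro: test_fun_mono)

lemma Lambda_eq_INF_lambda1: "Lambda V = (INF R. lambda1 V R)"
  unfolding Lambda_def
  by (rule tendsto_Lim[OF trivial_limit_at_top_linorder tendsto_at_top_INF_antimono[OF lambda1_antimono]])

lemma lambda1_lower_bound:
  fixes V :: "'a::euclidean_space \<Rightarrow> real"
  assumes dim: "3 \<le> DIM('a)" and K: "0 < K" and VK: "\<And>x. V x \<le> K / (1 + (norm x)\<^sup>2)"
  shows "ereal (1 / (4 * K)) \<le> lambda1 V R"
  unfolding lambda1_def
proof (rule Inf_greatest, clarify)
  fix u g
  assume tf: "test_fun R u g" and normalized: "(LINT x|lborel. V x * (u x)\<^sup>2) = 1"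
  have "integrable lborel (\<lambda>x. V x * (u x)\<^sup>2)"
    using normalized not_integrable_integral_eq by fastforce
  moreover have "integrable lborel (\<lambda>x. K * ((u x)\<^sup>2 / (1 + (norm x)\<^sup>2)))"
    by (intro integrable_mult_right integrable_vanishing_outside_cball[where r=R] continuous_intros
        test_fun_continuous[OF tf]) (auto simp: test_fun_vanishes[OF tf])
  moreover have "V x * (u x)\<^sup>2 \<le> K * ((u x)\<^sup>2 / (1 + (norm x)\<^sup>2))" for x
    using mult_right_mono[OF VK[of x], of "(u x)\<^sup>2"] by simp
  ultimately have "1 \<le> K * (LINT x|lborel. (u x)\<^sup>2 / (1 + (norm x)\<^sup>2))"
    unfolding normalized[symmetric] by (subst integral_mult_right_zero[symmetric]) (rule integral_mono)
  also have "\<dots> \<le> K * (4 * (LINT x|lborel. (norm (g x))\<^sup>2))"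
    using hardy_inequality_test_fun[OF tf dim] K by (intro mult_left_mono) auto
  finally show "ereal (1 / (4 * K)) \<le> ereal (LINT x|lborel. (norm (g x))\<^sup>2)"
    using K by (simp add: field_simps)
qed

theorem theorem1p1:
  fixes V V1 V2 :: "'a::euclidean_space \<Rightarrow> real"
  assumes dim: "DIM('a) \<ge> 3"
    and holder: "\<exists>C \<beta>. 0 < \<beta> \<and> \<beta> \<le> 1 \<and> (\<forall>x y. \<bar>V x - V y\<bar> \<le> C * dist x y powr \<beta>)"
    and Vmeas: "V \<in> borel_measurable lborel"
    and Vbdd: "\<exists>M. \<forall>x. \<bar>V x\<bar> \<le> M"
    and split: "\<And>x. max (V x) 0 = V1 x + V2 x"
    and Vpos_nonzero: "\<not> (AE x in lborel. max (V x) 0 = 0)"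
    and V1meas: "V1 \<in> borel_measurable lborel"
    and V1int: "integrable lborel (\<lambda>x. \<bar>V1 x\<bar> powr (real DIM('a) / 2))"
    and V2inf: "((\<lambda>x. (norm x)\<^sup>2 * V2 x) \<longlongrightarrow> 0) at_infinity"
    and decay: "\<exists>A \<alpha>. A > 0 \<and> \<alpha> > 0 \<and> (\<forall>x. x \<noteq> 0 \<longrightarrow> max (V x) 0 \<le> A * norm x powr (-2 - \<alpha>))"
    and V2zero: "((\<lambda>x. norm x powr (2 * (real DIM('a) - 1) / real DIM('a)) * V2 x) \<longlongrightarrow> 0) (at 0)"
  shows "Lambda V > 0"
proof -
  obtain M where M: "\<And>x. \<bar>V x\<bar> \<le> M"
    using Vbdd by blast
  obtain A \<alpha> where "0 < A" "0 < \<alpha>" "\<And>x. x \<noteq> 0 \<Longrightarrow> max (V x) 0 \<le> A * norm x powr (-2 - \<alpha>)"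
    using decay by blast
  then obtain K where K: "0 < K" "\<And>x. max (V x) 0 \<le> K / (1 + (norm x)\<^sup>2)"
    using bounded_decaying_le_inverse_quadratic[of "\<lambda>x. max (V x) 0" M A \<alpha>] M
    by (force simp: abs_le_iff)
  have "ereal (1 / (4 * K)) \<le> Lambda V"
    unfolding Lambda_eq_INF_lambda1
    by (intro INF_greatest lambda1_lower_bound[OF dim K(1)]) (use K(2) max.bounded_iff in blast)
  moreover have "0 < ereal (1 / (4 * K))"
    using K(1) by simp
  ultimately show ?thesis
    by order
qed

end
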